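(* There is a faithful functor $\Phi\colon\Delta R^{op}\to\mathcal{I}\Gamma(as)$, the identity on objects, such that for all $n$: $\Phi$ sends the (opposite of the) coface $\delta_i\colon[n-1]\to[n]$ ($0\leqslant i\leqslant n$) to $d_i\colon[n]\to[n-1]$, the (opposite of the) codegeneracy $\sigma_j\colon[n+1]\to[n]$ ($0\leqslant j\leqslant n$) to $s_j\colon[n]\to[n+1]$, and the (opposite of the) reflection $r_n$ of $[n]$ to $\rho_n$. Consequently $\Delta R^{op}$ is isomorphic to the subcategory $\mathcal{R}$ of $\mathcal{I}\Gamma(as)$ generated by the morphisms $d_i$, $s_j$, $\rho_n$.
   Context: Let $C_2=\{1,t\}$ and $[n]=\{0,\dots,n\}$. The category $\mathcal{IF}(as)$ has objects $[n]$; a morphism $f\colon[n]\to[m]$ is a map of sets with a total order on each fibre $f^{-1}(i)$ and a label in $C_2$ on each element of $[n]$ (written $j^\alpha$). For $S=\{j_1^{\alpha_1}<\cdots<j_r^{\alpha_r}\}$ put $1\ast S=S$, $t\ast S=\{j_r^{t\alpha_r}<\cdots<j_1^{t\alpha_1}\}$; the composite of $f\colon[n]\to[m]$, $g\colon[m]\to[p]$ has underlying map $g\circ f$ and fibres $(g\circ f)^{-1}(i)=\coprod_{j^\alpha\in g^{-1}(i)}\alpha\ast f^{-1}(j)$ (ordered disjoint union). $\mathcal{I}\Gamma(as)$ is the subcategory of morphisms with $f(0)=0$. Morphisms of $\mathcal{I}\Gamma(as)$ (all labels $1$ unless stated): for $n\geqslant1$ and $0\leqslant i\leqslant n-1$,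 $d_i\colon[n]\to[n-1]$ sends $j\mapsto j$ ($j\leqslant i$), $j\mapsto j-1$ ($j>i$), with fibre over $i$ equal to $\{i<i+1\}$; $d_n\colon[n]\to[n-1]$ sends $j\mapsto j$ ($j<n$), $n\mapsto0$, with fibre over $0$ equal to $\{n<0\}$; for $0\leqslant j\leqslant n$, $s_j\colon[n]\to[n+1]$ sends $k\mapsto k$ ($k\leqslant j$), $k\mapsto k+1$ ($k>j$), so the fibre over $j+1$ is empty; $\rho_n\colon[n]\to[n]$ sends $0\mapsto 0$ and $k\mapsto n+1-k$ for $1\leqslant k\leqslant n$, with all labels equal to $t$. The reflexive category $\Delta R$ has objects $[n]$; a morphism $[n]\to[m]$ is a pair $(\phi,g)$ with $\phi\colon[n]\to[m]$ order-preserving and $g\in\{1,r_n\}$, where $r_n(i)=n-i$; composition is $(\psi,1)\circ(\phi,g)=(\psi\circ\phi,g)$ and $(\psi,r_m)\circ(\phi,g)=(\psi\circ\phi',r_ng)$ where $\phi'(i)=m-\phi(n-i)$; $r_n^2=1$. Here $\delta_i\colon[n-1]\to[n]$ is the order-preserving injection missing $i$, $\sigma_j\colon[n+1]\to[n]$ the order-preserving surjection with $\sigma_j(j)=\sigma_j(j+1)=j$, both regarded as $(\delta_i,1)$, $(\sigma_j,1)$, and the reflection is $(\mathrm{id},r_n)$. *)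

theory Defs
  imports Main
begin

text \<open>A morphism f : [n] \<rightarrow> [m] of IF(as) is encoded as a triple (n, m, F), where
  F is a list of length m+1; F ! i is the fibre over i, given as the list of its
  elements in their total order, each element j paired with its label in C2
  (False = 1, True = t).\<close>

type_synonym ifmor = "nat \<times> nat \<times> (nat \<times> bool) list list"

definition if_src :: "ifmor \<Rightarrow> nat" where "if_src f = fst f"
definition if_tgt :: "ifmor \<Rightarrow> nat" where "if_tgt f = fst (snd f)"
definition if_fib :: "ifmor \<Rightarrow> (nat \<times> bool) list list" where "if_fib f = snd (snd f)"

definition if_wf :: "ifmor \<Rightarrow> bool" where
  "if_wf f \<longleftrightarrow> length (if_fib f) = Suc (if_tgt f)
     \<and> distinct (map fst (concat (if_fib f)))
     \<and> set (map fst (concat (if_fib f))) = {0..if_src f}"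

text \<open>Morphisms of I Gamma(as): those with f(0) = 0, i.e. 0 lies in the fibre over 0.\<close>
definition IGamma_mor :: "ifmor \<Rightarrow> bool" where
  "IGamma_mor f \<longleftrightarrow> if_wf f \<and> 0 \<in> fst ` set (if_fib f ! 0)"

definition lab_act :: "bool \<Rightarrow> (nat \<times> bool) list \<Rightarrow> (nat \<times> bool) list" where
  "lab_act \<alpha> S = (if \<alpha> then rev (map (\<lambda>(k, \<beta>). (k, \<not> \<beta>)) S) else S)"

definition if_comp :: "ifmor \<Rightarrow> ifmor \<Rightarrow> ifmor" where
  "if_comp g f = (if_src f, if_tgt g,
      map (\<lambda>Gi. concat (map (\<lambda>(j, \<alpha>). lab_act \<alpha> (if_fib f ! j)) Gi)) (if_fib g))"

definition if_id :: "nat \<Rightarrow> ifmor" where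
  "if_id n = (n, n, map (\<lambda>i. [(i, False)]) [0..<Suc n])"

definition dmor :: "nat \<Rightarrow> nat \<Rightarrow> ifmor" where
  "dmor n i = (n, n - 1,
     map (\<lambda>k. if i < n then
                 (if k < i then [(k, False)] else if k = i then [(i, False), (Suc i, False)]
                  else [(Suc k, False)])
               else
                 (if k = 0 then [(n, False), (0, False)] else [(k, False)]))
         [0..<n])"

definition smor :: "nat \<Rightarrow> nat \<Rightarrow> ifmor" where
  "smor n j = (n, Suc n,
     map (\<lambda>k. if k \<le> j then [(k, False)] else if k = Suc j then [] else [(k - 1, False)])
         [0..<Suc (Suc n)])"

definition rhomor :: "nat \<Rightarrow> ifmor" where
  "rhomor n = (n, n,
     map (\<lambda>k. if k = 0 then [(0, True)] else [(Suc n - k, True)]) [0..<Suc n])"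

inductive_set Rgen :: "ifmor set" where
  R_id: "if_id n \<in> Rgen"
| R_d: "1 \<le> n \<Longrightarrow> i \<le> n \<Longrightarrow> dmor n i \<in> Rgen"
| R_s: "j \<le> n \<Longrightarrow> smor n j \<in> Rgen"
| R_rho: "rhomor n \<in> Rgen"
| R_comp: "f \<in> Rgen \<Longrightarrow> g \<in> Rgen \<Longrightarrow> if_tgt f = if_src g \<Longrightarrow> if_comp g f \<in> Rgen"

text \<open>A morphism (phi, g) : [n] \<rightarrow> [m] is encoded as (n, m, phi, g) with phi given by
  its list of values phi(0), ..., phi(n), and g :: bool (False = 1, True = r_n).\<close>

type_synonym drmor = "nat \<times> nat \<times> nat list \<times> bool"

definition dr_src :: "drmor \<Rightarrow> nat" where "dr_src f = fst f"
definition dr_tgt :: "drmor \<Rightarrow> nat" where "dr_tgt f = fst (snd f)"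
definition dr_map :: "drmor \<Rightarrow> nat list" where "dr_map f = fst (snd (snd f))"
definition dr_refl :: "drmor \<Rightarrow> bool" where "dr_refl f = snd (snd (snd f))"

definition dr_wf :: "drmor \<Rightarrow> bool" where
  "dr_wf f \<longleftrightarrow> length (dr_map f) = Suc (dr_src f) \<and> sorted (dr_map f)
     \<and> (\<forall>x \<in> set (dr_map f). x \<le> dr_tgt f)"

definition dr_comp :: "drmor \<Rightarrow> drmor \<Rightarrow> drmor" where
  "dr_comp q f = (let n = dr_src f; m = dr_tgt f; \<phi> = dr_map f; \<psi> = dr_map q in
     if \<not> dr_refl q then (n, dr_tgt q, map (\<lambda>i. \<psi> ! (\<phi> ! i)) [0..<Suc n], dr_refl f)
     else (n, dr_tgt q, map (\<lambda>i. \<psi> ! (m - \<phi> ! (n - i))) [0..<Suc n], \<not> dr_refl f))"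

definition dr_id :: "nat \<Rightarrow> drmor" where
  "dr_id n = (n, n, [0..<Suc n], False)"

definition delta :: "nat \<Rightarrow> nat \<Rightarrow> drmor" where
  "delta n i = (n - 1, n, map (\<lambda>k. if k < i then k else Suc k) [0..<n], False)"

definition sigma :: "nat \<Rightarrow> nat \<Rightarrow> drmor" where
  "sigma n j = (Suc n, n, map (\<lambda>k. if k \<le> j then k else k - 1) [0..<Suc (Suc n)], False)"

definition dr_reflection :: "nat \<Rightarrow> drmor" where
  "dr_reflection n = (n, n, [0..<Suc n], True)"

end

theory Submission
  imports Defs
begin

text \<open>For order-preserving \<open>\<phi> : [n] \<rightarrow> [m]\<close>, the map \<open>\<Phi>(\<phi>, 1) : [m] \<rightarrow> [n]\<close> has
  as fibre over \<open>i > 0\<close> the interval \<open>(\<phi>(i-1), \<phi>(i)]\<close> and over \<open>0\<close> the cyclic interval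
  \<open>(\<phi>(n), m] \<union> [0, \<phi>(0)]\<close>, each in cyclic order and labelled \<open>1\<close>; and
  \<open>\<Phi>(\<phi>, r\<^sub>n) = \<rho>\<^sub>n \<circ> \<Phi>(\<phi>, 1)\<close>. Functoriality comes down to two facts about these arcs:
  the arcs of \<open>\<psi>\<close> over the points of an arc of \<open>\<phi>\<close> concatenate to the arc of \<open>\<psi> \<circ> \<phi>\<close>,
  and reflecting an arc of \<open>\<phi>\<close> gives an arc of \<open>\<phi>'\<close>. The arcs determine \<open>\<phi>\<close>, which gives
  faithfulness. Every order-preserving map factors through cofaces and codegeneracies, so
  the image of \<open>\<Phi>\<close> is generated by the \<open>d\<^sub>i\<close>, \<open>s\<^sub>j\<close> and \<open>\<rho>\<^sub>n\<close>.\<close>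

definition ord_map :: "nat list \<Rightarrow> nat \<Rightarrow> nat \<Rightarrow> bool" where
  "ord_map p n m \<longleftrightarrow> length p = Suc n \<and> sorted p \<and> (\<forall>x \<in> set p. x \<le> m)"

definition ord_comp :: "nat list \<Rightarrow> nat list \<Rightarrow> nat \<Rightarrow> nat list" where
  "ord_comp q p n = map (\<lambda>i. q ! (p ! i)) [0..<Suc n]"

text \<open>The map \<open>\<phi>'\<close> of the composition law \<open>(\<psi>, r\<^sub>m) \<circ> (\<phi>, g) = (\<psi> \<circ> \<phi>', r\<^sub>n g)\<close>.\<close>

definition ord_reflect :: "nat list \<Rightarrow> nat \<Rightarrow> nat \<Rightarrow> nat list" where
  "ord_reflect p n m = map (\<lambda>i. m - p ! (n - i)) [0..<Suc n]"

lemma ord_map_mono: "ord_map p n m \<Longrightarrow> i \<le> j \<Longrightarrow> j \<le> n \<Longrightarrow> p ! i \<le> p ! j"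
  unfolding ord_map_def by (simp add: sorted_nth_mono)

lemma ord_map_le: "ord_map p n m \<Longrightarrow> i \<le> n \<Longrightarrow> p ! i \<le> m"
  unfolding ord_map_def by auto

lemma ord_map_upt_iff:
  "ord_map (map f [0..<Suc n]) n m
     \<longleftrightarrow> (\<forall>i j. i \<le> j \<longrightarrow> j \<le> n \<longrightarrow> f i \<le> f j) \<and> (\<forall>i \<le> n. f i \<le> m)"
  unfolding ord_map_def sorted_iff_nth_mono by (auto simp del: upt_Suc simp: less_Suc_eq_le)

lemma ord_map_comp: "ord_map p n m \<Longrightarrow> ord_map q m r \<Longrightarrow> ord_map (ord_comp q p n) n r"
  unfolding ord_comp_def ord_map_upt_iff by (meson ord_map_le ord_map_mono)

lemma ord_map_reflect: "ord_map p n m \<Longrightarrow> ord_map (ord_reflect p n m) n m"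
  unfolding ord_reflect_def ord_map_upt_iff by (simp add: diff_le_mono2 ord_map_mono)

lemma dr_wf_iff: "dr_wf (n, m, p, a) \<longleftrightarrow> ord_map p n m"
  by (simp add: dr_wf_def ord_map_def dr_src_def dr_tgt_def dr_map_def)

lemma dr_comp_eq:
  "dr_comp (m, r, q, b) (n, m, p, a)
     = (n, r, ord_comp q (if b then ord_reflect p n m else p) n, a \<noteq> b)"
  by (auto simp: dr_comp_def dr_src_def dr_tgt_def dr_map_def dr_refl_def ord_comp_def
      ord_reflect_def simp del: upt_Suc)

lemma dr_wf_comp:
  assumes "dr_wf f" "dr_wf g" "dr_tgt f = dr_src g"
  shows "dr_wf (dr_comp g f)"
  using assms by (cases f, cases g)
    (auto simp: dr_comp_eq dr_wf_iff dr_src_def dr_tgt_def intro: ord_map_comp ord_map_reflect)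

lemma dr_wf_id: "dr_wf (dr_id n)"
  by (simp add: dr_id_def dr_wf_iff ord_map_def del: upt_Suc)

lemma dr_wf_reflection: "dr_wf (dr_reflection n)"
  by (simp add: dr_reflection_def dr_wf_iff ord_map_def del: upt_Suc)

lemma dr_wf_delta: "1 \<le> n \<Longrightarrow> dr_wf (delta n i)"
  unfolding delta_def dr_wf_iff by (cases n) (auto simp: ord_map_upt_iff simp del: upt_Suc)

lemma dr_wf_sigma: "j \<le> n \<Longrightarrow> dr_wf (sigma n j)"
  unfolding sigma_def dr_wf_iff by (auto simp: ord_map_upt_iff simp del: upt_Suc)

definition rho_pt :: "nat \<Rightarrow> nat \<Rightarrow> nat" where
  "rho_pt n i = (if i = 0 then 0 else Suc n - i)"

lemma rho_pt_le: "i \<le> n \<Longrightarrow> rho_pt n i \<le> n"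
  by (auto simp: rho_pt_def)

lemma rho_pt_rho_pt: "i \<le> n \<Longrightarrow> rho_pt n (rho_pt n i) = i"
  by (simp add: rho_pt_def)

lemma map_rho_pt_upt: "map (rho_pt n) [Suc 0..<Suc n] = rev [Suc 0..<Suc n]"
  by (rule nth_equalityI) (auto simp: rev_nth rho_pt_def simp del: upt_Suc)

lemma map_rho_pt_rev_upt:
  assumes "1 \<le> a" "a \<le> b" "b \<le> Suc m"
  shows "map (rho_pt m) (rev [a..<b]) = [Suc (Suc m) - b..<Suc (Suc m) - a]"
  by (rule nth_equalityI) (use assms in \<open>auto simp: rev_nth rho_pt_def\<close>)

lemma ord_comp_nth: "i \<le> n \<Longrightarrow> ord_comp q p n ! i = q ! (p ! i)"
  by (simp add: ord_comp_def del: upt_Suc)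

lemma ord_reflect_nth: "i \<le> n \<Longrightarrow> ord_reflect p n m ! i = m - p ! (n - i)"
  by (simp add: ord_reflect_def del: upt_Suc)

definition arc :: "nat list \<Rightarrow> nat \<Rightarrow> nat \<Rightarrow> nat \<Rightarrow> nat list" where
  "arc p n m i = (if i = 0 then [Suc (p ! n)..<Suc m] @ [0..<Suc (p ! 0)]
                  else [Suc (p ! (i - 1))..<Suc (p ! i)])"

lemma arc_le: "ord_map p n m \<Longrightarrow> i \<le> n \<Longrightarrow> j \<in> set (arc p n m i) \<Longrightarrow> j \<le> m"
  using ord_map_le[of p n m i] ord_map_le[of p n m "i - 1"] by (auto simp: arc_def split: if_splits)

lemma upt_append_upt: "i \<le> j \<Longrightarrow> j \<le> k \<Longrightarrow> [i..<j] @ [j..<k] = [i..<k]"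
  using upt_add_eq_append[of i j "k - j"] by simp

lemma concat_arc_upt:
  assumes q: "ord_map q m r" and "a \<le> b" "b \<le> m"
  shows "concat (map (arc q m r) [Suc a..<Suc b]) = [Suc (q ! a)..<Suc (q ! b)]"
  using assms(2,3)
proof (induction b rule: dec_induct)
  case (step b)
  then have IH: "concat (map (arc q m r) [Suc a..<Suc b]) = [Suc (q ! a)..<Suc (q ! b)]"
    by (simp del: upt_Suc)
  have "concat (map (arc q m r) [Suc a..<Suc (Suc b)])
      = concat (map (arc q m r) [Suc a..<Suc b]) @ arc q m r (Suc b)"
    using step(1) by (simp add: upt_Suc_append del: upt_Suc)
  also have "\<dots> = [Suc (q ! a)..<Suc (q ! b)] @ [Suc (q ! b)..<Suc (q ! Suc b)]"
    by (simp add: IH arc_def del: upt_Suc)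
  also have "\<dots> = [Suc (q ! a)..<Suc (q ! Suc b)]"
    using step ord_map_mono[OF q, of a b] ord_map_mono[OF q, of b "Suc b"]
    by (intro upt_append_upt) simp_all
  finally show ?case .
qed simp

lemma concat_arcs:
  assumes p: "ord_map p n m"
  shows "concat (map (arc p n m) [0..<Suc n]) = [Suc (p ! n)..<Suc m] @ [0..<Suc (p ! n)]"
proof -
  have "concat (map (arc p n m) [0..<Suc n])
      = [Suc (p ! n)..<Suc m] @ [0..<Suc (p ! 0)] @ [Suc (p ! 0)..<Suc (p ! n)]"
    using concat_arc_upt[OF p, of 0 n] by (simp add: arc_def upt_conv_Cons del: upt_Suc)
  then show ?thesis
    using ord_map_mono[OF p, of 0 n] by (simp add: upt_append_upt del: upt_Suc)
qed

lemma concat_arc_arc: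
  assumes p: "ord_map p n m" and q: "ord_map q m r" and i: "i \<le> n"
  shows "concat (map (arc q m r) (arc p n m i)) = arc (ord_comp q p n) n r i"
proof (cases "i = 0")
  case True
  have pn: "p ! n \<le> m" and p0: "p ! 0 \<le> m" using ord_map_le[OF p] by auto
  have "arc p n m i = [Suc (p ! n)..<Suc m] @ 0 # [Suc 0..<Suc (p ! 0)]"
    using True by (simp add: arc_def upt_conv_Cons)
  then have "concat (map (arc q m r) (arc p n m i))
      = [Suc (q ! (p ! n))..<Suc (q ! m)] @ [Suc (q ! m)..<Suc r] @ [0..<Suc (q ! 0)]
        @ [Suc (q ! 0)..<Suc (q ! (p ! 0))]"
    using concat_arc_upt[OF q pn order.refl] concat_arc_upt[OF q le0 p0]
    by (simp add: arc_def del: upt_Suc)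
  also have "\<dots> = [Suc (q ! (p ! n))..<Suc r] @ [0..<Suc (q ! (p ! 0))]"
    using ord_map_mono[OF q, of "p ! n" m] ord_map_mono[OF q, of 0 "p ! 0"] ord_map_le[OF q, of m]
      pn p0
    by (simp add: upt_append_upt del: upt_Suc flip: append_assoc)
  also have "\<dots> = arc (ord_comp q p n) n r i"
    using True by (simp add: arc_def ord_comp_nth)
  finally show ?thesis .
next
  case False
  have "concat (map (arc q m r) (arc p n m i)) = [Suc (q ! (p ! (i - 1)))..<Suc (q ! (p ! i))]"
    using False i ord_map_le[OF p i] ord_map_mono[OF p, of "i - 1" i]
    by (simp add: arc_def concat_arc_upt[OF q] del: upt_Suc)
  also have "\<dots> = arc (ord_comp q p n) n r i"
    using False i by (simp add: arc_def ord_comp_nth)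
  finally show ?thesis .
qed

lemma rho_pt_rev_arc:
  assumes p: "ord_map p n m" and i: "i \<le> n"
  shows "map (rho_pt m) (rev (arc p n m i)) = arc (ord_reflect p n m) n m (rho_pt n i)"
proof (cases "i = 0")
  case True
  have pn: "p ! n \<le> m" and p0: "p ! 0 \<le> m" using ord_map_le[OF p] by auto
  have "map (rho_pt m) (rev (arc p n m i))
      = map (rho_pt m) (rev [Suc 0..<Suc (p ! 0)]) @ [0]
        @ map (rho_pt m) (rev [Suc (p ! n)..<Suc m])"
    using True by (simp add: arc_def upt_conv_Cons rho_pt_def del: upt_Suc)
  also have "\<dots> = [Suc (m - p ! 0)..<Suc m] @ [0..<Suc (m - p ! n)]"
    using pn p0 by (simp add: map_rho_pt_rev_upt Suc_diff_le upt_conv_Cons del: upt_Suc)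
  also have "\<dots> = arc (ord_reflect p n m) n m (rho_pt n i)"
    using True by (simp add: arc_def rho_pt_def ord_reflect_nth)
  finally show ?thesis .
next
  case False
  have "map (rho_pt m) (rev (arc p n m i)) = [Suc (m - p ! i)..<Suc (m - p ! (i - 1))]"
    using False i ord_map_le[OF p i] ord_map_mono[OF p, of "i - 1" i]
    by (simp add: arc_def map_rho_pt_rev_upt Suc_diff_le del: upt_Suc)
  also have "\<dots> = arc (ord_reflect p n m) n m (rho_pt n i)"
    using False i by (simp add: arc_def rho_pt_def ord_reflect_nth Suc_diff_le)
  finally show ?thesis .
qed

lemma arc_eq_imp_eq:
  assumes p: "ord_map p n m" and q: "ord_map q n m"
    and arcs: "\<And>i. i \<le> n \<Longrightarrow> arc p n m i = arc q n m i"
  shows "p = q"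
proof -
  have "p ! k = q ! k" if "k \<le> n" for k
    using that
  proof (induction k)
    case 0
    have "last (arc p n m 0) = p ! 0" "last (arc q n m 0) = q ! 0" by (simp_all add: arc_def)
    then show ?case using arcs[of 0] by simp
  next
    case (Suc k)
    have "length (arc p n m (Suc k)) = p ! Suc k - p ! k"
      "length (arc q n m (Suc k)) = q ! Suc k - q ! k"
      by (simp_all add: arc_def del: upt_Suc)
    moreover have "p ! k \<le> p ! Suc k" "q ! k \<le> q ! Suc k"
      using ord_map_mono[OF p] ord_map_mono[OF q] Suc.prems by auto
    ultimately show ?case using arcs[OF Suc.prems] Suc by force
  qed
  then show ?thesis
    using p q by (intro nth_equalityI) (auto simp: ord_map_def less_Suc_eq_le)
qed

definition unlabelled :: "nat list \<Rightarrow> (nat \<times> bool) list" where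
  "unlabelled L = map (\<lambda>j. (j, False)) L"

lemma map_fst_lab_act: "map fst (lab_act a S) = (if a then rev (map fst S) else map fst S)"
  by (simp add: lab_act_def rev_map comp_def case_prod_beta)

lemma map_fst_unlabelled [simp]: "map fst (unlabelled L) = L"
  by (simp add: unlabelled_def comp_def)

lemma lab_act_lab_act: "lab_act a (lab_act b S) = lab_act (a \<noteq> b) S"
  by (simp add: lab_act_def rev_map comp_def case_prod_beta)

lemma concat_map_lab_act_unlabelled:
  "concat (map (\<lambda>(j, \<beta>). lab_act \<beta> (X j)) (lab_act a (unlabelled L)))
     = lab_act a (concat (map X L))"
  by (induction L) (auto simp: unlabelled_def lab_act_def)

lemma concat_map_unlabelled:
  "concat (map (\<lambda>j. lab_act b (unlabelled (Y j))) L)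
     = lab_act b (unlabelled (concat (map Y (if b then rev L else L))))"
  by (induction L) (auto simp: unlabelled_def lab_act_def)

definition Phi_fibre :: "nat list \<Rightarrow> nat \<Rightarrow> nat \<Rightarrow> bool \<Rightarrow> nat \<Rightarrow> (nat \<times> bool) list"
  where
  "Phi_fibre p n m a i = lab_act a (unlabelled (arc p n m (if a then rho_pt n i else i)))"

fun Phi :: "drmor \<Rightarrow> ifmor" where
  "Phi (n, m, p, a) = (m, n, map (Phi_fibre p n m a) [0..<Suc n])"

lemma Phi_fibre_comp:
  assumes p: "ord_map p n m" and q: "ord_map q m r" and i: "i \<le> n"
  shows "concat (map (\<lambda>(j, \<beta>). lab_act \<beta> (Phi_fibre q m r b j)) (Phi_fibre p n m a i))
       = Phi_fibre (ord_comp q (if b then ord_reflect p n m else p) n) n r (a \<noteq> b) i"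
proof -
  define k where "k = (if a then rho_pt n i else i)"
  have k: "k \<le> n" using i rho_pt_le by (simp add: k_def)
  have "concat (map (\<lambda>(j, \<beta>). lab_act \<beta> (Phi_fibre q m r b j)) (Phi_fibre p n m a i))
      = lab_act a (concat (map (Phi_fibre q m r b) (arc p n m k)))"
    unfolding Phi_fibre_def[of p n m a i] k_def by (rule concat_map_lab_act_unlabelled)
  also have "\<dots> = lab_act a (lab_act b (unlabelled (concat (map (arc q m r)
          (map (\<lambda>j. if b then rho_pt m j else j) (if b then rev (arc p n m k) else arc p n m k))))))"
    using concat_map_unlabelled[of b "\<lambda>j. arc q m r (if b then rho_pt m j else j)"]
    by (simp add: Phi_fibre_def[abs_def] comp_def)
  also have "\<dots> = lab_act a (lab_act b (unlabelled
                    (arc (ord_comp q (if b then ord_reflect p n m else p) n) n r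
                      (if b then rho_pt n k else k))))"
    using rho_pt_rev_arc[OF p k] concat_arc_arc[OF ord_map_reflect[OF p] q rho_pt_le[OF k]]
      concat_arc_arc[OF p q k] by (cases b) (simp_all del: map_map)
  also have "\<dots> = Phi_fibre (ord_comp q (if b then ord_reflect p n m else p) n) n r (a \<noteq> b) i"
    using rho_pt_rho_pt[OF i] by (auto simp: Phi_fibre_def lab_act_lab_act k_def)
  finally show ?thesis .
qed

lemma Phi_comp:
  assumes f: "dr_wf f" and g: "dr_wf g" and fg: "dr_tgt f = dr_src g"
  shows "Phi (dr_comp g f) = if_comp (Phi f) (Phi g)"
proof -
  obtain n m p a r q b where fe: "f = (n, m, p, a)" and ge: "g = (m, r, q, b)"
    using fg by (cases f, cases g) (auto simp: dr_src_def dr_tgt_def)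
  have p: "ord_map p n m" and q: "ord_map q m r" using f g fe ge by (simp_all add: dr_wf_iff)
  have "concat (map (\<lambda>(j, \<beta>). lab_act \<beta> (if_fib (Phi g) ! j)) (Phi_fibre p n m a i))
      = Phi_fibre (ord_comp q (if b then ord_reflect p n m else p) n) n r (a \<noteq> b) i"
    if i: "i \<le> n" for i
  proof -
    have "fst x \<le> m" if "x \<in> set (Phi_fibre p n m a i)" for x
      using that arc_le[OF p i] arc_le[OF p rho_pt_le[OF i]]
      by (auto simp: Phi_fibre_def lab_act_def unlabelled_def split: if_splits)
    then have "if_fib (Phi g) ! fst x = Phi_fibre q m r b (fst x)"
      if "x \<in> set (Phi_fibre p n m a i)" for x
      using that by (simp add: ge if_fib_def le_imp_less_Suc del: upt_Suc)
    then show ?thesis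
      unfolding Phi_fibre_comp[OF p q i, symmetric]
      by (intro arg_cong[where f = concat] map_cong) auto
  qed
  then show ?thesis
    by (simp add: fe ge dr_comp_eq if_comp_def if_src_def if_tgt_def if_fib_def del: upt_Suc)
qed

lemma arc_single: "k \<le> n \<Longrightarrow> arc [0..<Suc n] n n k = [k]"
  by (cases k) (auto simp: arc_def nth_append)

lemma Phi_id: "Phi (dr_id n) = if_id n"
  by (auto simp: dr_id_def if_id_def Phi_fibre_def arc_single unlabelled_def lab_act_def
      simp del: upt_Suc)

lemma Phi_reflection: "Phi (dr_reflection n) = rhomor n"
  by (auto simp: dr_reflection_def rhomor_def Phi_fibre_def arc_single rho_pt_le unlabelled_def
      lab_act_def simp del: upt_Suc) (auto simp: rho_pt_def)

lemma Phi_delta: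
  assumes "1 \<le> n" "i \<le> n"
  shows "Phi (delta n i) = dmor n i"
proof -
  define p where "p = map (\<lambda>k. if k < i then k else Suc k) [0..<n]"
  have p_nth: "p ! k = (if k < i then k else Suc k)" if "k < n" for k
    using that by (simp add: p_def)
  have "Phi_fibre p (n - 1) n False k
      = (if i < n then (if k < i then [(k, False)] else if k = i then [(i, False), (Suc i, False)]
                        else [(Suc k, False)])
         else (if k = 0 then [(n, False), (0, False)] else [(k, False)]))" if "k < n" for k
    using assms that
    by (cases "k = 0") (auto simp: Phi_fibre_def arc_def unlabelled_def lab_act_def p_nth upt_conv_Cons)
  moreover have "Suc (n - 1) = n" using assms by simp
  ultimately show ?thesis
    by (simp add: delta_def dmor_def p_def[symmetric])
qed

lemma Phi_sigma:
  assumes "j \<le> n"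
  shows "Phi (sigma n j) = smor n j"
proof -
  define p where "p = map (\<lambda>k. if k \<le> j then k else k - 1) [0..<Suc (Suc n)]"
  have p_nth: "p ! k = (if k \<le> j then k else k - 1)" if "k < Suc (Suc n)" for k
    using that by (simp add: p_def del: upt_Suc)
  have "Phi_fibre p (Suc n) n False k
      = (if k \<le> j then [(k, False)] else if k = Suc j then [] else [(k - 1, False)])"
    if "k < Suc (Suc n)" for k
    using assms that
    by (cases "k = 0") (auto simp: Phi_fibre_def arc_def unlabelled_def lab_act_def p_nth upt_conv_Cons)
  then show ?thesis
    by (simp add: sigma_def smor_def p_def[symmetric] del: upt_Suc)
qed

lemma map_fst_concat_Phi_fibres:
  "map fst (concat (map (Phi_fibre p n m a) [0..<Suc n]))
     = (if a then rev (arc p n m 0) @ rev (concat (map (arc p n m) [Suc 0..<Suc n]))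
        else concat (map (arc p n m) [0..<Suc n]))"
proof -
  have "map fst (concat (map (Phi_fibre p n m a) [0..<Suc n]))
      = concat (map (\<lambda>i. if a then rev (arc p n m (rho_pt n i)) else arc p n m i) [0..<Suc n])"
    by (cases a) (simp_all add: map_concat comp_def Phi_fibre_def map_fst_lab_act del: upt_Suc)
  also have "\<dots> = (if a then rev (arc p n m 0)
                          @ concat (map (rev \<circ> arc p n m) (map (rho_pt n) [Suc 0..<Suc n]))
        else concat (map (arc p n m) [0..<Suc n]))"
    by (simp add: upt_conv_Cons rho_pt_def comp_def del: upt_Suc)
  also have "\<dots> = (if a then rev (arc p n m 0) @ rev (concat (map (arc p n m) [Suc 0..<Suc n]))
        else concat (map (arc p n m) [0..<Suc n]))"
    by (simp add: map_rho_pt_upt rev_concat rev_map del: upt_Suc)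
  finally show ?thesis .
qed

lemma zero_in_Phi_fibre_0: "0 \<in> fst ` set (Phi_fibre p n m a 0)"
  by (auto simp: Phi_fibre_def rho_pt_def arc_def image_set map_fst_lab_act)

lemma Phi_IGamma:
  assumes "dr_wf f"
  shows "IGamma_mor (Phi f) \<and> if_src (Phi f) = dr_tgt f \<and> if_tgt (Phi f) = dr_src f"
proof -
  obtain n m p a where f: "f = (n, m, p, a)" by (cases f) auto
  have p: "ord_map p n m" using assms f by (simp add: dr_wf_iff)
  let ?arcs = "concat (map (arc p n m) [0..<Suc n])"
  have arcs: "distinct ?arcs" "set ?arcs = {0..m}"
    using concat_arcs[OF p] ord_map_le[OF p, of n] by auto
  have "?arcs = arc p n m 0 @ concat (map (arc p n m) [Suc 0..<Suc n])"
    by (simp add: upt_conv_Cons del: upt_Suc)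
  then have "distinct (map fst (concat (map (Phi_fibre p n m a) [0..<Suc n])))
      \<and> set (map fst (concat (map (Phi_fibre p n m a) [0..<Suc n]))) = {0..m}"
    using arcs by (auto simp: map_fst_concat_Phi_fibres simp del: upt_Suc)
  with zero_in_Phi_fibre_0 show ?thesis
    by (simp add: f IGamma_mor_def if_wf_def if_src_def if_tgt_def if_fib_def dr_src_def dr_tgt_def
        nth_Cons' del: upt_Suc)
qed

lemma Phi_fibre_labels: "x \<in> set (Phi_fibre p n m a i) \<Longrightarrow> snd x = a"
  by (cases a) (auto simp: Phi_fibre_def lab_act_def unlabelled_def)

lemma Phi_faithful:
  assumes f: "dr_wf f" and g: "dr_wf g" and "dr_src f = dr_src g" "dr_tgt f = dr_tgt g"
    and eq: "Phi f = Phi g"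
  shows "f = g"
proof -
  obtain n m p a q b where fe: "f = (n, m, p, a)" and ge: "g = (n, m, q, b)"
    using assms(3,4) by (cases f, cases g) (auto simp: dr_src_def dr_tgt_def)
  have p: "ord_map p n m" and q: "ord_map q n m" using f g fe ge by (simp_all add: dr_wf_iff)
  have fibres: "Phi_fibre p n m a i = Phi_fibre q n m b i" if "i \<le> n" for i
    using eq that by (simp add: fe ge del: upt_Suc)
  have ab: "a = b"
    using zero_in_Phi_fibre_0[of p n m a] fibres[of 0] Phi_fibre_labels
    by (metis imageE zero_le)
  have "arc p n m k = arc q n m k" if k: "k \<le> n" for k
  proof -
    define i where "i = (if a then rho_pt n k else k)"
    have "i \<le> n" and "(if a then rho_pt n i else i) = k"
      using k rho_pt_le rho_pt_rho_pt by (auto simp: i_def)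
    then show ?thesis
      using arg_cong[OF fibres, of i "map fst"] ab by (auto simp: Phi_fibre_def map_fst_lab_act)
  qed
  then have "p = q" by (rule arc_eq_imp_eq[OF p q])
  then show ?thesis using fe ge ab by simp
qed

lemma Phi_dr_comp_mem_Rgen:
  assumes "dr_wf f" "dr_wf g" "dr_tgt f = dr_src g" "Phi f \<in> Rgen" "Phi g \<in> Rgen"
  shows "Phi (dr_comp g f) \<in> Rgen"
  using assms Phi_IGamma[of f] Phi_IGamma[of g] by (simp add: Phi_comp R_comp)

lemma ord_map_factor_delta:
  assumes p: "ord_map p n m" and k: "k \<le> m" "k \<notin> set p"
  obtains p' where "1 \<le> m" "ord_map p' n (m - 1)"
    "dr_comp (delta m k) (n, m - 1, p', False) = (n, m, p, False)"
proof
  have "p ! 0 \<in> set p" using p by (simp add: ord_map_def)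
  then show m: "1 \<le> m"
    using k ord_map_le[OF p, of 0] by (cases m) auto
  define p' where "p' = map (\<lambda>x. if x < k then x else x - 1) p"
  show "ord_map p' n (m - 1)"
    using p k unfolding ord_map_def p'_def sorted_map
    by (auto elim!: sorted_wrt_mono_rel[rotated])
  have "ord_comp (map (\<lambda>x. if x < k then x else Suc x) [0..<m]) p' n ! i = p ! i"
    if i: "i \<le> n" for i
  proof -
    have pi: "p ! i \<le> m" "p ! i \<noteq> k" using ord_map_le[OF p i] k p i by (auto simp: ord_map_def)
    have p'i: "p' ! i = (if p ! i < k then p ! i else p ! i - 1)"
      using p i by (simp add: p'_def ord_map_def)
    then have "p' ! i < m" using pi k(1) by auto
    then show ?thesis
      using i pi p'i by (auto simp: ord_comp_nth)
  qed
  then have "ord_comp (map (\<lambda>x. if x < k then x else Suc x) [0..<m]) p' n = p"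
    using p
    by (intro nth_equalityI) (auto simp: ord_comp_def ord_map_def less_Suc_eq_le simp del: upt_Suc)
  then show "dr_comp (delta m k) (n, m - 1, p', False) = (n, m, p, False)"
    using m by (simp add: delta_def dr_comp_eq)
qed

lemma ord_map_factor_sigma:
  assumes p: "ord_map p n m" and j: "j < n" "p ! j = p ! Suc j"
  obtains p' where "j \<le> n - 1" "ord_map p' (n - 1) m"
    "dr_comp (n - 1, m, p', False) (sigma (n - 1) j) = (n, m, p, False)"
proof
  show jn: "j \<le> n - 1" using j by simp
  have n: "Suc (n - Suc 0) = n" using j by simp
  define p' where "p' = map (\<lambda>i. if i \<le> j then p ! i else p ! Suc i) [0..<n]"
  have p'_eq: "p' = map (\<lambda>i. if i \<le> j then p ! i else p ! Suc i) [0..<Suc (n - 1)]"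
    using j by (simp add: p'_def)
  show "ord_map p' (n - 1) m"
    unfolding p'_eq ord_map_upt_iff using j
    by (auto simp del: upt_Suc intro!: ord_map_mono[OF p] ord_map_le[OF p])
  define s where "s = map (\<lambda>k. if k \<le> j then k else k - 1) [0..<Suc n]"
  have "ord_comp p' s n ! i = p ! i" if i: "i \<le> n" for i
  proof -
    have s_i: "s ! i = (if i \<le> j then i else i - 1)"
      using i by (simp add: s_def del: upt_Suc)
    then have "s ! i < n" using i j by auto
    then have "ord_comp p' s n ! i = (if s ! i \<le> j then p ! (s ! i) else p ! Suc (s ! i))"
      using i by (simp add: ord_comp_nth p'_def)
    then show ?thesis
      using s_i j by (cases "i \<le> j"; cases "i = Suc j") auto
  qed
  then have "ord_comp p' s n = p"
    using p
    by (intro nth_equalityI) (auto simp: ord_comp_def ord_map_def less_Suc_eq_le simp del: upt_Suc)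
  then show "dr_comp (n - 1, m, p', False) (sigma (n - 1) j) = (n, m, p, False)"
    by (simp add: sigma_def n s_def[symmetric] dr_comp_eq del: upt_Suc)
qed

lemma sorted_not_distinct_adjacent:
  assumes "sorted xs" "\<not> distinct xs"
  obtains j where "Suc j < length xs" "xs ! j = xs ! Suc j"
proof -
  have "\<not> sorted_wrt (<) xs" using assms(2) by (simp add: strict_sorted_iff)
  then obtain j where "Suc j < length xs" "\<not> xs ! j < xs ! Suc j"
    by (auto simp: sorted_wrt_iff_nth_Suc_transp)
  moreover have "xs ! j \<le> xs ! Suc j"
    using assms(1) calculation(1) by (simp add: sorted_iff_nth_Suc)
  ultimately show ?thesis using that by simp
qed

lemma ord_map_bij_eq_id:
  assumes p: "ord_map p n m" and "set p = {0..m}" "distinct p"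
  shows "(n, m, p, False) = dr_id m"
proof -
  have "p = [0..<Suc m]"
  proof (rule sorted_distinct_set_unique)
    show "sorted p" using p by (simp add: ord_map_def)
    show "set p = set [0..<Suc m]"
      using assms(2) by (simp only: set_upt atLeastLessThanSuc_atLeastAtMost)
  qed (use assms(3) in \<open>simp_all del: upt_Suc\<close>)
  then have "n = m" using p by (simp add: ord_map_def)
  with \<open>p = [0..<Suc m]\<close> show ?thesis by (simp add: dr_id_def)
qed

lemma Phi_ord_mem_Rgen: "ord_map p n m \<Longrightarrow> Phi (n, m, p, False) \<in> Rgen"
proof (induction "n + m" arbitrary: n m p rule: less_induct)
  case less
  note p = less.prems
  consider (not_surj) k where "k \<le> m" "k \<notin> set p"
    | (not_inj) "set p = {0..m}" "\<not> distinct p"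
    | (bij) "set p = {0..m}" "distinct p"
    using p by (force simp: ord_map_def)
  then show ?case
  proof cases
    case not_surj
    then obtain p' where m: "1 \<le> m" and p': "ord_map p' n (m - 1)"
      and eq: "dr_comp (delta m k) (n, m - 1, p', False) = (n, m, p, False)"
      using ord_map_factor_delta[OF p] by blast
    have "Phi (dr_comp (delta m k) (n, m - 1, p', False)) \<in> Rgen"
    proof (rule Phi_dr_comp_mem_Rgen)
      show "dr_wf (n, m - 1, p', False)" using p' by (simp add: dr_wf_iff)
      show "Phi (n, m - 1, p', False) \<in> Rgen" using less.hyps[OF _ p'] m by simp
      show "Phi (delta m k) \<in> Rgen"
        using Phi_delta[OF m not_surj(1)] R_d[OF m not_surj(1)] by simp
      show "dr_wf (delta m k)" using m by (rule dr_wf_delta)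
    qed (simp add: delta_def dr_src_def dr_tgt_def)
    then show ?thesis by (simp only: eq)
  next
    case not_inj
    then obtain j where j: "j < n" "p ! j = p ! Suc j"
      using p sorted_not_distinct_adjacent[of p] by (auto simp: ord_map_def)
    then obtain p' where jn: "j \<le> n - 1" and p': "ord_map p' (n - 1) m"
      and eq: "dr_comp (n - 1, m, p', False) (sigma (n - 1) j) = (n, m, p, False)"
      using ord_map_factor_sigma[OF p] by blast
    have "Phi (dr_comp (n - 1, m, p', False) (sigma (n - 1) j)) \<in> Rgen"
    proof (rule Phi_dr_comp_mem_Rgen)
      show "dr_wf (n - 1, m, p', False)" using p' by (simp add: dr_wf_iff)
      show "Phi (n - 1, m, p', False) \<in> Rgen" using less.hyps[OF _ p'] j by simp
      show "Phi (sigma (n - 1) j) \<in> Rgen" using Phi_sigma[OF jn] R_s[OF jn] by simp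
      show "dr_wf (sigma (n - 1) j)" using jn by (rule dr_wf_sigma)
    qed (simp add: sigma_def dr_src_def dr_tgt_def)
    then show ?thesis by (simp only: eq)
  next
    case bij
    then show ?thesis using ord_map_bij_eq_id[OF p] Phi_id R_id by metis
  qed
qed

lemma Phi_mem_Rgen:
  assumes "dr_wf f"
  shows "Phi f \<in> Rgen"
proof -
  obtain n m p a where f: "f = (n, m, p, a)" by (cases f) auto
  have p: "ord_map p n m" using assms f by (simp add: dr_wf_iff)
  have "ord_comp p [0..<Suc n] n = p"
    using p by (intro nth_equalityI) (auto simp: ord_comp_def ord_map_def simp del: upt_Suc)
  then have "f = (if a then dr_comp (n, m, p, False) (dr_reflection n) else (n, m, p, False))"
    by (simp add: f dr_reflection_def dr_comp_eq)
  moreover have "Phi (dr_comp (n, m, p, False) (dr_reflection n)) \<in> Rgen"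
  proof (rule Phi_dr_comp_mem_Rgen)
    show "dr_wf (n, m, p, False)" using p by (simp add: dr_wf_iff)
    show "Phi (n, m, p, False) \<in> Rgen" using p by (rule Phi_ord_mem_Rgen)
    show "Phi (dr_reflection n) \<in> Rgen" by (simp add: Phi_reflection R_rho)
    show "dr_wf (dr_reflection n)" by (rule dr_wf_reflection)
  qed (simp add: dr_reflection_def dr_src_def dr_tgt_def)
  ultimately show ?thesis
    using Phi_ord_mem_Rgen[OF p] by (cases a) simp_all
qed

lemma Rgen_subset_Phi_image: "Rgen \<subseteq> Phi ` {f. dr_wf f}"
proof
  fix x assume "x \<in> Rgen"
  then show "x \<in> Phi ` {f. dr_wf f}"
  proof (induction rule: Rgen.induct)
    case (R_id n)
    show ?case using Phi_id dr_wf_id by (metis image_eqI mem_Collect_eq)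
  next
    case (R_d n i)
    then show ?case using Phi_delta dr_wf_delta by (metis image_eqI mem_Collect_eq)
  next
    case (R_s j n)
    then show ?case using Phi_sigma dr_wf_sigma by (metis image_eqI mem_Collect_eq)
  next
    case (R_rho n)
    show ?case using Phi_reflection dr_wf_reflection by (metis image_eqI mem_Collect_eq)
  next
    case (R_comp f g)
    then obtain f' g' where f': "dr_wf f'" "f = Phi f'" and g': "dr_wf g'" "g = Phi g'" by auto
    have "dr_tgt g' = dr_src f'" using R_comp(3) f' g' Phi_IGamma by metis
    then show ?case
      using f' g' Phi_comp dr_wf_comp by (metis image_eqI mem_Collect_eq)
  qed
qed

theorem mainTheorem4:
  shows "\<exists>\<Phi> :: drmor \<Rightarrow> ifmor.
    (\<forall>f. dr_wf f \<longrightarrow> IGamma_mor (\<Phi> f) \<and> if_src (\<Phi> f) = dr_tgt f \<and> if_tgt (\<Phi> f) = dr_src f)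
  \<and> (\<forall>n. \<Phi> (dr_id n) = if_id n)
  \<and> (\<forall>f g. dr_wf f \<longrightarrow> dr_wf g \<longrightarrow> dr_tgt f = dr_src g \<longrightarrow>
        \<Phi> (dr_comp g f) = if_comp (\<Phi> f) (\<Phi> g))
  \<and> (\<forall>f g. dr_wf f \<longrightarrow> dr_wf g \<longrightarrow> dr_src f = dr_src g \<longrightarrow> dr_tgt f = dr_tgt g \<longrightarrow>
        \<Phi> f = \<Phi> g \<longrightarrow> f = g)
  \<and> (\<forall>n i. 1 \<le> n \<longrightarrow> i \<le> n \<longrightarrow> \<Phi> (delta n i) = dmor n i)
  \<and> (\<forall>n j. j \<le> n \<longrightarrow> \<Phi> (sigma n j) = smor n j)
  \<and> (\<forall>n. \<Phi> (dr_reflection n) = rhomor n)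
  \<and> \<Phi> ` {f. dr_wf f} = Rgen"
proof (rule exI[of _ Phi], intro conjI allI impI)
  show "Phi ` {f. dr_wf f} = Rgen"
    using Phi_mem_Rgen Rgen_subset_Phi_image by blast
next
  fix f g
  assume "dr_wf f" "dr_wf g" "dr_src f = dr_src g" "dr_tgt f = dr_tgt g" "Phi f = Phi g"
  then show "f = g" by (rule Phi_faithful)
qed (simp_all add: Phi_IGamma Phi_id Phi_comp Phi_delta Phi_sigma Phi_reflection del: Phi.simps)

end
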